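(* Let $(A,\cdot,\circ)$ be a skew brace and $B$, $C$ sub-skew braces with $A = B\cdot C$. If $B$ is a trivial skew brace, then $B*C$ is a normal subgroup of $(A,\cdot)$.
   Context: A skew brace is a set $A$ with two group operations $\cdot$ (often written by juxtaposition) and $\circ$ such that $a\circ(bc) = (a\circ b)\,a^{-1}\,(a\circ c)$ for all $a,b,c\in A$. $a^{-1}$ denotes the inverse in $(A,\cdot)$. Define $a*b = a^{-1}(a\circ b)b^{-1}$; $B*C$ is the subgroup of $(A,\cdot)$ generated by all $b*c$, $b\in B$, $c\in C$. A sub-skew brace is a subset that is a subgroup of both groups; it is trivial if $a\circ b=ab$ for all its elements $a,b$. $A=B\cdot C$ means every element of $A$ is $bc$ with $b\in B$, $c\in C$. *)

theory Defs
  imports "HOL-Algebra.Algebra"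
begin

text \<open>A skew brace on the common carrier of two groups: G = (A, \<cdot>) and H = (A, \<circ>).\<close>
definition skew_brace :: "('a, 'm) monoid_scheme \<Rightarrow> ('a, 'n) monoid_scheme \<Rightarrow> bool" where
  "skew_brace G H \<longleftrightarrow> group G \<and> group H \<and> carrier H = carrier G \<and>
     (\<forall>a\<in>carrier G. \<forall>b\<in>carrier G. \<forall>c\<in>carrier G.
        a \<otimes>\<^bsub>H\<^esub> (b \<otimes>\<^bsub>G\<^esub> c)
          = (a \<otimes>\<^bsub>H\<^esub> b) \<otimes>\<^bsub>G\<^esub> inv\<^bsub>G\<^esub> a \<otimes>\<^bsub>G\<^esub> (a \<otimes>\<^bsub>H\<^esub> c))"

definition brace_star :: "('a, 'm) monoid_scheme \<Rightarrow> ('a, 'n) monoid_scheme \<Rightarrow> 'a \<Rightarrow> 'a \<Rightarrow> 'a" where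
  "brace_star G H a b = inv\<^bsub>G\<^esub> a \<otimes>\<^bsub>G\<^esub> (a \<otimes>\<^bsub>H\<^esub> b) \<otimes>\<^bsub>G\<^esub> inv\<^bsub>G\<^esub> b"

definition brace_star_set :: "('a, 'm) monoid_scheme \<Rightarrow> ('a, 'n) monoid_scheme \<Rightarrow> 'a set \<Rightarrow> 'a set \<Rightarrow> 'a set" where
  "brace_star_set G H B C = generate G {brace_star G H b c | b c. b \<in> B \<and> c \<in> C}"

definition sub_skew_brace :: "('a, 'm) monoid_scheme \<Rightarrow> ('a, 'n) monoid_scheme \<Rightarrow> 'a set \<Rightarrow> bool" where
  "sub_skew_brace G H B \<longleftrightarrow> subgroup B G \<and> subgroup B H"

definition trivial_on :: "('a, 'm) monoid_scheme \<Rightarrow> ('a, 'n) monoid_scheme \<Rightarrow> 'a set \<Rightarrow> bool" where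
  "trivial_on G H B \<longleftrightarrow> (\<forall>a\<in>B. \<forall>b\<in>B. a \<otimes>\<^bsub>H\<^esub> b = a \<otimes>\<^bsub>G\<^esub> b)"

end

theory Submission
  imports Defs
begin

text \<open>In every skew brace, a \<star> (x y) = (a \<star> x) \<cdot> x (a \<star> y) x\<inverse>. For b \<in> B and c, c' \<in> C
  this gives c (b \<star> c') c\<inverse> = (b \<star> c)\<inverse> (b \<star> c c'), so B * C is stable under conjugation by C.
  If B is trivial then b1 \<star> b = 1 for b1, b \<in> B, and the same identity yields
  b (b1 \<star> c) b\<inverse> = b1 \<star> (b c) = b1 \<star> (c' b') = b1 \<star> c', where b c = c' b' because A = B C = C B.
  So B * C is stable under conjugation by B as well, hence by all of A = B C.\<close>

lemma (in group) inv_mult_cancel_left [simp]: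
  "a \<in> carrier G \<Longrightarrow> b \<in> carrier G \<Longrightarrow> inv a \<otimes> (a \<otimes> b) = b"
  by (simp add: m_assoc [symmetric])

lemma (in group) mult_inv_cancel_left [simp]:
  "a \<in> carrier G \<Longrightarrow> b \<in> carrier G \<Longrightarrow> a \<otimes> (inv a \<otimes> b) = b"
  by (simp add: m_assoc [symmetric])

lemma (in group) conj_generate_closed:
  assumes S: "S \<subseteq> carrier G" and x: "x \<in> carrier G"
    and gens: "\<And>s. s \<in> S \<Longrightarrow> x \<otimes> s \<otimes> inv x \<in> generate G S"
    and h: "h \<in> generate G S"
  shows "x \<otimes> h \<otimes> inv x \<in> generate G S"
proof -
  define conj where "conj h = x \<otimes> h \<otimes> inv x" for h
  have "conj \<in> hom G G"
    by (rule homI) (use x in \<open>simp_all add: conj_def m_assoc inv_solve_left\<close>)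
  then interpret conj: group_hom G G conj
    by (simp add: group_hom_axioms_def group_hom_def is_group)
  have "conj ` generate G S = generate G (conj ` S)"
    using conj.generate_img[OF S] by simp
  also have "\<dots> \<subseteq> generate G S"
    using gens unfolding conj_def by (intro generate_subgroup_incl generate_is_subgroup[OF S]) blast
  finally show ?thesis
    using h unfolding conj_def by blast
qed

lemma (in group) carrier_set_mult_commute:
  assumes "subgroup B G" "subgroup C G" and "carrier G = B <#> C"
  shows "carrier G = C <#> B"
proof
  show "carrier G \<subseteq> C <#> B"
  proof
    fix x assume x: "x \<in> carrier G"
    have "inv x \<in> B <#> C"
      using inv_closed[OF x] by (simp only: assms(3))
    then obtain b c where "b \<in> B" "c \<in> C" and bc: "inv x = b \<otimes> c"
      unfolding set_mult_def by blast
    have "x = inv c \<otimes> inv b"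
      using bc x subgroup.mem_carrier[OF assms(1) \<open>b \<in> B\<close>] subgroup.mem_carrier[OF assms(2) \<open>c \<in> C\<close>]
      by (metis inv_inv inv_mult_group)
    moreover have "inv c \<in> C" "inv b \<in> B"
      using subgroup.m_inv_closed[OF assms(2) \<open>c \<in> C\<close>] subgroup.m_inv_closed[OF assms(1) \<open>b \<in> B\<close>] .
    ultimately show "x \<in> C <#> B"
      unfolding set_mult_def by blast
  qed
next
  show "C <#> B \<subseteq> carrier G"
    using subgroup.mem_carrier[OF assms(1)] subgroup.mem_carrier[OF assms(2)]
    unfolding set_mult_def by blast
qed

lemma (in group) normal_if_conj_closed_by_factors:
  assumes N: "subgroup N G" and BC: "B \<subseteq> carrier G" "C \<subseteq> carrier G" "carrier G = B <#> C"
    and conjB: "\<And>b h. b \<in> B \<Longrightarrow> h \<in> N \<Longrightarrow> b \<otimes> h \<otimes> inv b \<in> N"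
    and conjC: "\<And>c h. c \<in> C \<Longrightarrow> h \<in> N \<Longrightarrow> c \<otimes> h \<otimes> inv c \<in> N"
  shows "N \<lhd> G"
  unfolding normal_inv_iff
proof (intro conjI N ballI)
  fix x h assume "x \<in> carrier G" "h \<in> N"
  then have "x \<in> B <#> C"
    by (simp only: BC(3))
  then obtain b c where b: "b \<in> B" and c: "c \<in> C" and x: "x = b \<otimes> c"
    unfolding set_mult_def by blast
  have "b \<in> carrier G" "c \<in> carrier G" "h \<in> carrier G"
    using b c BC(1,2) subgroup.mem_carrier[OF N \<open>h \<in> N\<close>] by blast+
  then have "x \<otimes> h \<otimes> inv x = b \<otimes> (c \<otimes> h \<otimes> inv c) \<otimes> inv b"
    by (simp add: x inv_mult_group m_assoc)
  then show "x \<otimes> h \<otimes> inv x \<in> N"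
    using conjB[OF b conjC[OF c \<open>h \<in> N\<close>]] by simp
qed

locale skew_brace_pair =
  fixes G :: "('a, 'm) monoid_scheme" (structure) and H :: "('a, 'n) monoid_scheme"
  assumes skew_brace: "skew_brace G H"
begin

sublocale group G
  using skew_brace by (simp add: skew_brace_def)

sublocale H: group H
  using skew_brace by (simp add: skew_brace_def)

abbreviation star :: "'a \<Rightarrow> 'a \<Rightarrow> 'a" (infixl "\<star>" 70)
  where "a \<star> b \<equiv> brace_star G H a b"

lemma carrier_H [simp]: "carrier H = carrier G"
  using skew_brace by (simp add: skew_brace_def)

lemma circ_closed [simp]: "a \<in> carrier G \<Longrightarrow> b \<in> carrier G \<Longrightarrow> a \<otimes>\<^bsub>H\<^esub> b \<in> carrier G"
  using H.m_closed by simp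

lemma circ_mult_distrib:
  "\<lbrakk>a \<in> carrier G; b \<in> carrier G; c \<in> carrier G\<rbrakk>
   \<Longrightarrow> a \<otimes>\<^bsub>H\<^esub> (b \<otimes> c) = (a \<otimes>\<^bsub>H\<^esub> b) \<otimes> inv a \<otimes> (a \<otimes>\<^bsub>H\<^esub> c)"
  using skew_brace by (simp add: skew_brace_def)

lemma star_closed [simp]: "a \<in> carrier G \<Longrightarrow> b \<in> carrier G \<Longrightarrow> a \<star> b \<in> carrier G"
  by (simp add: brace_star_def)

lemma star_mult_right:
  assumes "a \<in> carrier G" "b \<in> carrier G" "c \<in> carrier G"
  shows "a \<star> (b \<otimes> c) = (a \<star> b) \<otimes> (b \<otimes> (a \<star> c) \<otimes> inv b)"
  using assms by (simp add: brace_star_def circ_mult_distrib inv_mult_group m_assoc)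

lemma star_eq_one_if_circ_eq_mult:
  assumes "a \<in> carrier G" "b \<in> carrier G" "a \<otimes>\<^bsub>H\<^esub> b = a \<otimes> b"
  shows "a \<star> b = \<one>"
  using assms by (simp add: brace_star_def m_assoc)

lemma star_conj:
  assumes "a \<in> carrier G" "b \<in> carrier G" "c \<in> carrier G"
  shows "b \<otimes> (a \<star> c) \<otimes> inv b = inv (a \<star> b) \<otimes> (a \<star> (b \<otimes> c))"
  using assms by (simp add: star_mult_right m_assoc [symmetric])

lemma star_mult_right_conj:
  assumes "a \<in> carrier G" "b \<in> carrier G" "c \<in> carrier G" "a \<otimes>\<^bsub>H\<^esub> b = a \<otimes> b"
  shows "a \<star> (b \<otimes> c) = b \<otimes> (a \<star> c) \<otimes> inv b"
  using assms by (simp add: star_conj star_eq_one_if_circ_eq_mult)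

lemma star_mult_right_cancel:
  assumes "a \<in> carrier G" "b \<in> carrier G" "c \<in> carrier G" "a \<otimes>\<^bsub>H\<^esub> b = a \<otimes> b"
  shows "a \<star> (c \<otimes> b) = a \<star> c"
  using assms by (simp add: star_mult_right star_eq_one_if_circ_eq_mult)

lemma star_generators_closed:
  "B \<subseteq> carrier G \<Longrightarrow> C \<subseteq> carrier G \<Longrightarrow> {b \<star> c | b c. b \<in> B \<and> c \<in> C} \<subseteq> carrier G"
  using star_closed by blast

lemma subgroup_brace_star_set:
  "B \<subseteq> carrier G \<Longrightarrow> C \<subseteq> carrier G \<Longrightarrow> subgroup (brace_star_set G H B C) G"
  unfolding brace_star_set_def by (intro generate_is_subgroup star_generators_closed)

lemma brace_star_set_conj_closed_right:
  assumes B: "B \<subseteq> carrier G" and C: "subgroup C G" and "c \<in> C"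
    and h: "h \<in> brace_star_set G H B C"
  shows "c \<otimes> h \<otimes> inv c \<in> brace_star_set G H B C"
  unfolding brace_star_set_def
proof (rule conj_generate_closed [OF star_generators_closed [OF B subgroup.subset [OF C]] _ _
      h [unfolded brace_star_set_def]])
  show c: "c \<in> carrier G"
    using subgroup.mem_carrier [OF C \<open>c \<in> C\<close>] .
  fix s assume "s \<in> {b \<star> c | b c. b \<in> B \<and> c \<in> C}"
  then obtain b c' where "b \<in> B" "c' \<in> C" and s: "s = b \<star> c'"
    by blast
  have "c \<otimes> c' \<in> C"
    using subgroup.m_closed [OF C \<open>c \<in> C\<close> \<open>c' \<in> C\<close>] .
  then have "b \<star> c \<in> brace_star_set G H B C" "b \<star> (c \<otimes> c') \<in> brace_star_set G H B C"
    unfolding brace_star_set_def using \<open>b \<in> B\<close> \<open>c \<in> C\<close> by (intro generate.incl; blast)+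
  then have "inv (b \<star> c) \<otimes> (b \<star> (c \<otimes> c')) \<in> brace_star_set G H B C"
    using subgroup_brace_star_set [OF B subgroup.subset [OF C]]
    by (intro subgroup.m_closed subgroup.m_inv_closed)
  moreover have "c \<otimes> s \<otimes> inv c = inv (b \<star> c) \<otimes> (b \<star> (c \<otimes> c'))"
    unfolding s using B \<open>b \<in> B\<close> c subgroup.mem_carrier [OF C \<open>c' \<in> C\<close>]
    by (intro star_conj) auto
  ultimately show "c \<otimes> s \<otimes> inv c \<in> generate G {b \<star> c | b c. b \<in> B \<and> c \<in> C}"
    unfolding brace_star_set_def by simp
qed

lemma brace_star_set_conj_closed_trivial_left:
  assumes B: "subgroup B G" and C: "subgroup C G" and BC: "carrier G = B <#> C"
    and triv: "trivial_on G H B" and "b \<in> B"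
    and h: "h \<in> brace_star_set G H B C"
  shows "b \<otimes> h \<otimes> inv b \<in> brace_star_set G H B C"
  unfolding brace_star_set_def
proof (rule conj_generate_closed [OF star_generators_closed [OF subgroup.subset [OF B] subgroup.subset [OF C]]
      _ _ h [unfolded brace_star_set_def]])
  show b: "b \<in> carrier G"
    using subgroup.mem_carrier [OF B \<open>b \<in> B\<close>] .
  fix s assume "s \<in> {b \<star> c | b c. b \<in> B \<and> c \<in> C}"
  then obtain b1 c where "b1 \<in> B" "c \<in> C" and s: "s = b1 \<star> c"
    by blast
  have b1: "b1 \<in> carrier G" and c: "c \<in> carrier G"
    using subgroup.mem_carrier [OF B \<open>b1 \<in> B\<close>] subgroup.mem_carrier [OF C \<open>c \<in> C\<close>] .
  have "b \<otimes> c \<in> C <#> B"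
    using m_closed [OF b c] by (simp only: carrier_set_mult_commute [OF B C BC, symmetric])
  then obtain c' b' where "c' \<in> C" "b' \<in> B" and bc: "b \<otimes> c = c' \<otimes> b'"
    unfolding set_mult_def by blast
  have c': "c' \<in> carrier G" and b': "b' \<in> carrier G"
    using subgroup.mem_carrier [OF C \<open>c' \<in> C\<close>] subgroup.mem_carrier [OF B \<open>b' \<in> B\<close>] .
  have "b \<otimes> s \<otimes> inv b = b1 \<star> (b \<otimes> c)"
    using triv \<open>b1 \<in> B\<close> \<open>b \<in> B\<close> b1 b c
    by (simp add: s star_mult_right_conj trivial_on_def)
  also have "\<dots> = b1 \<star> c'"
    using triv \<open>b1 \<in> B\<close> \<open>b' \<in> B\<close> b1 b' c'
    by (simp add: bc star_mult_right_cancel trivial_on_def)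
  finally show "b \<otimes> s \<otimes> inv b \<in> generate G {b \<star> c | b c. b \<in> B \<and> c \<in> C}"
    using \<open>b1 \<in> B\<close> \<open>c' \<in> C\<close> by (auto intro: generate.incl)
qed

end

theorem proposition3p1:
  fixes G :: "('a, 'm) monoid_scheme" and H :: "('a, 'n) monoid_scheme" and B C :: "'a set"
  assumes "skew_brace G H"
    and "sub_skew_brace G H B" and "sub_skew_brace G H C"
    and "carrier G = B <#>\<^bsub>G\<^esub> C"
    and "trivial_on G H B"
  shows "brace_star_set G H B C \<lhd> G"
proof -
  interpret skew_brace_pair G H
    using assms(1) by unfold_locales
  have B: "subgroup B G" and C: "subgroup C G"
    using assms(2,3) by (simp_all add: sub_skew_brace_def)
  show ?thesis
  proof (rule normal_if_conj_closed_by_factors [OF _ subgroup.subset [OF B] subgroup.subset [OF C] assms(4)])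
    show "subgroup (brace_star_set G H B C) G"
      using subgroup_brace_star_set [OF subgroup.subset [OF B] subgroup.subset [OF C]] .
  qed (use brace_star_set_conj_closed_trivial_left [OF B C assms(4,5)]
         brace_star_set_conj_closed_right [OF subgroup.subset [OF B] C] in auto)
qed

end
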